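(* Fix $\ell\in\mathbb{Z}$ and $\beta>0$. As $k_0\to\infty$, the probability of the following event goes to $1$: for all $a\in[\ell-1,\ell]$ and all integers $N\ge k_0$, $$\frac12 s_a(t)\le Z_a^{(\frac N\beta,0)}(t)\le\frac32 s_a(t),\qquad\forall t\ge\frac{N+1}\beta.$$
   Context: $B$ is a standard Brownian motion and $s_a(t):=\sqrt{a+\beta t/4}$. For $(t_0,x_0)$, the forward diffusion $Z_a^{(t_0,x_0)}$ is the solution on $[t_0,\infty)$ of $dZ(t)=(a+\frac\beta4t-Z(t)^2)dt+dB(t)$, $Z(t_0)=x_0$, restarted from $+\infty$ whenever it hits $-\infty$. *)

theory Defs
  imports "HOL-Probability.Probability"
begin

definition brownian_motion :: "'a measure \<Rightarrow> (real \<Rightarrow> 'a \<Rightarrow> real) \<Rightarrow> bool" where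
  "brownian_motion M B \<longleftrightarrow>
     prob_space M \<and>
     (\<forall>t\<ge>0. B t \<in> borel_measurable M) \<and>
     (\<forall>\<omega>\<in>space M. B 0 \<omega> = 0 \<and> continuous_on {0..} (\<lambda>t. B t \<omega>)) \<and>
     (\<forall>s t. 0 \<le> s \<and> s < t \<longrightarrow>
        distributed M lborel (\<lambda>\<omega>. B t \<omega> - B s \<omega>)
          (\<lambda>x. ennreal (normal_density 0 (sqrt (t - s)) x))) \<and>
     (\<forall>ts :: real list. sorted_wrt (<) ts \<and> (\<forall>x\<in>set ts. 0 \<le> x) \<longrightarrow>
        prob_space.indep_vars M (\<lambda>_. borel)
          (\<lambda>i \<omega>. B (ts ! Suc i) \<omega> - B (ts ! i) \<omega>) {..<length ts - 1})"

definition s_fun :: "real \<Rightarrow> real \<Rightarrow> real \<Rightarrow> real" where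
  "s_fun \<beta> a t = sqrt (a + \<beta> * t / 4)"

(* Pathwise meaning of: Z solves dZ = (a + beta t/4 - Z^2) dt + db on [t0,oo), Z t0 = x0,
   restarted from +oo whenever it hits -oo.  S is the (locally finite) set of explosion
   times; between them Z is continuous and satisfies the integral equation; at each
   explosion time Z tends to -oo from the left and to +oo from the right. *)
definition diffusion_path ::
  "(real \<Rightarrow> real) \<Rightarrow> real \<Rightarrow> real \<Rightarrow> real \<Rightarrow> real \<Rightarrow> (real \<Rightarrow> real) \<Rightarrow> bool" where
  "diffusion_path b \<beta> a t0 x0 Z \<longleftrightarrow>
     (\<exists>S :: real set.
        S \<subseteq> {t0<..} \<and>
        (\<forall>T. finite (S \<inter> {t0..T})) \<and>
        Z t0 = x0 \<and>
        continuous_on ({t0..} - S) Z \<and>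
        (\<forall>s t. t0 \<le> s \<and> s \<le> t \<and> S \<inter> {s..t} = {} \<longrightarrow>
           Z t - Z s = integral {s..t} (\<lambda>u. a + \<beta> * u / 4 - (Z u)\<^sup>2) + (b t - b s)) \<and>
        (\<forall>\<tau>\<in>S. filterlim Z at_bot (at_left \<tau>) \<and> filterlim Z at_top (at_right \<tau>)))"

end

theory Submission
  imports Defs
begin

text \<open>Write \<open>s = s_a\<close>. Beyond time \<open>N/\<beta>\<close> with \<open>N\<close> large we have \<open>s \<ge> 4\<close> and \<open>s \<ge> 3\<beta>\<close>, and
  outside an event of small probability every increment of \<open>B\<close> over a time window of length
  \<open>1/\<beta>\<close> is at most \<open>s/8\<close>. On such paths the drift \<open>s\<^sup>2 - Z\<^sup>2\<close> dominates the noise: while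
  \<open>|Z| \<le> 3s/4\<close> it lifts \<open>Z\<close> by at least \<open>19s/16\<close> over one window, while \<open>Z \<ge> 5s/4\<close> it pushes
  \<open>Z\<close> down by \<open>25s/16\<close>, and near the barriers \<open>s/2\<close> and \<open>3s/2\<close> it has the right sign.
  A first-violation argument then shows that, once started at \<open>0\<close>, \<open>Z\<close> enters the band
  \<open>[s/2, 3s/2]\<close> within one window and never leaves it (in particular it never explodes).
  The exceptional event is controlled by Levy's dyadic chaining and fourth moments of Gaussian
  increments: on the window starting at \<open>m/\<beta>\<close> it has probability \<open>O(1/m\<^sup>2)\<close>, which is summable
  in \<open>m\<close>.\<close>

section \<open>Continuous induction and crossing times\<close>

lemma continuous_induction_nonneg:
  fixes F :: "real \<Rightarrow> real"
  assumes right_cont: "\<And>t. t0 \<le> t \<Longrightarrow> t < T \<Longrightarrow> (F \<longlongrightarrow> F t) (at_right t)"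
    and step: "\<And>t. t0 \<le> t \<Longrightarrow> t < T \<Longrightarrow> (\<And>u. t0 \<le> u \<Longrightarrow> u < t \<Longrightarrow> 0 \<le> F u) \<Longrightarrow> 0 < F t"
    and "t0 \<le> t" "t < T"
  shows "0 \<le> F t"
proof (rule ccontr)
  assume "\<not> 0 \<le> F t"
  define E where "E = {x. t0 \<le> x \<and> x < T \<and> F x < 0}"
  have "t \<in> E" using assms(3,4) \<open>\<not> 0 \<le> F t\<close> by (auto simp: E_def)
  have bdd: "bdd_below E" by (auto simp: E_def bdd_below_def)
  define t1 where "t1 = Inf E"
  have "t1 \<le> t" using \<open>t \<in> E\<close> bdd by (simp add: t1_def cInf_lower)
  have "t0 \<le> t1" unfolding t1_def using \<open>t \<in> E\<close> by (intro cInf_greatest) (auto simp: E_def)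
  have "0 \<le> F u" if "t0 \<le> u" "u < t1" for u
    using that cInf_lower[OF _ bdd, of u] \<open>t1 \<le> t\<close> assms(4) by (force simp: E_def t1_def)
  then have "0 < F t1" using step \<open>t0 \<le> t1\<close> \<open>t1 \<le> t\<close> assms(4) by simp
  then have "\<forall>\<^sub>F x in at_right t1. 0 < F x"
    using order_tendstoD(1)[OF right_cont] \<open>t0 \<le> t1\<close> \<open>t1 \<le> t\<close> assms(4) by simp
  then obtain c where "c > t1" and pos: "\<And>y. t1 < y \<Longrightarrow> y < c \<Longrightarrow> 0 < F y"
    by (auto simp: eventually_at_right_field)
  obtain e where "e \<in> E" "e < c"
    using \<open>t \<in> E\<close> \<open>c > t1\<close> cInf_less_iff[OF _ bdd] unfolding t1_def by blast
  moreover have "t1 \<le> e" using \<open>e \<in> E\<close> bdd by (simp add: t1_def cInf_lower)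
  ultimately show False using pos[of e] \<open>0 < F t1\<close> by (cases "e = t1") (auto simp: E_def)
qed

lemma last_crossing:
  fixes f g :: "real \<Rightarrow> real"
  assumes f: "continuous_on {x..y} f" and g: "continuous_on {x..y} g" and "x \<le> y"
  obtains "f y \<le> g y"
    | p where "x \<le> p" "p < y" "f p = g p" "\<And>u. p < u \<Longrightarrow> u \<le> y \<Longrightarrow> g u < f u"
    | "\<And>u. x \<le> u \<Longrightarrow> u \<le> y \<Longrightarrow> g u < f u"
proof -
  consider "f y \<le> g y" | "g y < f y" "\<exists>q\<in>{x..y}. f q \<le> g q" | "\<forall>q\<in>{x..y}. g q < f q"
    by force
  then show thesis
  proof cases
    case 2
    define P where "P = {q \<in> {x..y}. f q \<le> g q}"
    have "closed P" unfolding P_def using f g by (intro continuous_on_closed_Collect_le) auto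
    moreover have bdd: "bdd_above P" by (auto simp: P_def bdd_above_def)
    moreover have "P \<noteq> {}" using 2 by (auto simp: P_def)
    ultimately have "Sup P \<in> P" using closed_contains_Sup by blast
    define p where "p = Sup P"
    have p: "x \<le> p" "p < y" "f p \<le> g p"
      using \<open>Sup P \<in> P\<close> 2 by (auto simp: P_def p_def less_le)
    have later: "g u < f u" if "p < u" "u \<le> y" for u
      using that p cSup_upper[OF _ bdd, of u] by (force simp: P_def p_def)
    have "continuous_on (closure {p<..y}) (\<lambda>u. f u - g u)"
      using p f g by (auto intro!: continuous_intros elim: continuous_on_subset)
    then have "0 \<le> f p - g p"
      by (rule continuous_ge_on_closure) (use p later in \<open>auto simp: less_imp_le\<close>)
    then show thesis using that(2)[of p] p later by simp
  qed (use that in auto)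
qed

section \<open>The Riccati equation driven by a path with small increments\<close>

definition riccati_solution_on ::
  "(real \<Rightarrow> real) \<Rightarrow> real \<Rightarrow> real \<Rightarrow> real \<Rightarrow> real \<Rightarrow> real \<Rightarrow> (real \<Rightarrow> real) \<Rightarrow> bool" where
  "riccati_solution_on b \<beta> a t0 x0 T Z \<longleftrightarrow>
     Z t0 = x0 \<and> continuous_on {t0..<T} Z \<and>
     (\<forall>s t. t0 \<le> s \<and> s \<le> t \<and> t < T \<longrightarrow>
        Z t - Z s = integral {s..t} (\<lambda>u. a + \<beta> * u / 4 - (Z u)\<^sup>2) + (b t - b s))"

lemma diffusion_path_until_explosion:
  assumes "diffusion_path b \<beta> a t0 x0 Z"
  obtains "\<And>T. riccati_solution_on b \<beta> a t0 x0 T Z"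
    | T where "t0 < T" "riccati_solution_on b \<beta> a t0 x0 T Z" "filterlim Z at_bot (at_left T)"
proof -
  obtain S where S: "S \<subseteq> {t0<..}" "\<And>T. finite (S \<inter> {t0..T})" "Z t0 = x0"
    "continuous_on ({t0..} - S) Z"
    "\<And>s t. t0 \<le> s \<Longrightarrow> s \<le> t \<Longrightarrow> S \<inter> {s..t} = {} \<Longrightarrow>
           Z t - Z s = integral {s..t} (\<lambda>u. a + \<beta> * u / 4 - (Z u)\<^sup>2) + (b t - b s)"
    "\<And>\<tau>. \<tau> \<in> S \<Longrightarrow> filterlim Z at_bot (at_left \<tau>)"
    using assms unfolding diffusion_path_def by blast
  have solution: "riccati_solution_on b \<beta> a t0 x0 T Z" if "S \<inter> {t0..<T} = {}" for T
    unfolding riccati_solution_on_def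
  proof (intro conjI allI impI)
    show "continuous_on {t0..<T} Z" using that by (intro continuous_on_subset[OF S(4)]) auto
    fix s t assume "t0 \<le> s \<and> s \<le> t \<and> t < T"
    then show "Z t - Z s = integral {s..t} (\<lambda>u. a + \<beta> * u / 4 - (Z u)\<^sup>2) + (b t - b s)"
      using that by (intro S(5)) auto
  qed (rule S(3))
  show thesis
  proof (cases "S = {}")
    case True
    then show thesis using that(1) solution by blast
  next
    case False
    then obtain \<tau> where "\<tau> \<in> S" by blast
    define F where "F = S \<inter> {t0..\<tau>}"
    have "finite F" "\<tau> \<in> F" using S(1,2) \<open>\<tau> \<in> S\<close> by (auto simp: F_def)
    define T where "T = Min F"
    have "T \<in> F" using Min_in[OF \<open>finite F\<close>] \<open>\<tau> \<in> F\<close> by (auto simp: T_def)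
    then have "T \<in> S" "t0 < T" using S(1) by (auto simp: F_def)
    moreover have "S \<inter> {t0..<T} = {}"
      using Min_le[OF \<open>finite F\<close>] Min_in[OF \<open>finite F\<close>] \<open>\<tau> \<in> F\<close>
      by (fastforce simp: T_def F_def)
    ultimately show thesis using that(2) solution S(6) by blast
  qed
qed

locale riccati_forcing =
  fixes \<beta> a t0 :: real and b :: "real \<Rightarrow> real"
  assumes beta_pos: "0 < \<beta>"
    and t0_nonneg: "0 \<le> t0"
    and large_at_t0: "16 + 9 * \<beta>\<^sup>2 \<le> a + \<beta> * t0 / 8"
    and forcing_small:
      "\<And>u v. t0 \<le> u \<Longrightarrow> u \<le> v \<Longrightarrow> v \<le> u + 1 / \<beta> \<Longrightarrow> (b v - b u)\<^sup>2 \<le> \<beta> * u / 512"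
begin

abbreviation sa :: "real \<Rightarrow> real" where
  "sa \<equiv> s_fun \<beta> a"

lemma large_after_t0: "t0 \<le> u \<Longrightarrow> 16 + 9 * \<beta>\<^sup>2 \<le> a + \<beta> * u / 8"
  using large_at_t0 mult_left_mono[of t0 u \<beta>] beta_pos by linarith

lemma beta_mult_nonneg: "t0 \<le> u \<Longrightarrow> 0 \<le> \<beta> * u"
  using beta_pos t0_nonneg by simp

lemma sa_sq: "t0 \<le> u \<Longrightarrow> (sa u)\<^sup>2 = a + \<beta> * u / 4"
proof -
  assume "t0 \<le> u"
  then have "0 \<le> a + \<beta> * u / 4"
    using large_after_t0[of u] beta_mult_nonneg[of u] zero_le_power2[of \<beta>] by linarith
  then show ?thesis by (simp add: s_fun_def)
qed

lemma sa_ge: "t0 \<le> u \<Longrightarrow> 4 \<le> sa u \<and> 3 * \<beta> \<le> sa u"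
proof -
  assume "t0 \<le> u"
  then have "16 + 9 * \<beta>\<^sup>2 \<le> a + \<beta> * u / 4" using large_after_t0[of u] beta_mult_nonneg[of u] by simp
  then have "sqrt (16 + 9 * \<beta>\<^sup>2) \<le> sa u" by (simp add: s_fun_def)
  moreover have "4 \<le> sqrt (16 + 9 * \<beta>\<^sup>2)" "3 * \<beta> \<le> sqrt (16 + 9 * \<beta>\<^sup>2)"
    using beta_pos by (auto intro!: real_le_rsqrt simp: power_mult_distrib)
  ultimately show ?thesis by linarith
qed

lemma sa_pos: "t0 \<le> u \<Longrightarrow> 0 < sa u"
  using sa_ge[of u] by simp

lemma sa_mono: "u \<le> v \<Longrightarrow> sa u \<le> sa v"
  using beta_pos by (simp add: s_fun_def)

lemma isCont_sa: "isCont sa t"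
  unfolding s_fun_def by (intro continuous_intros) simp

lemma sa_continuous_on: "continuous_on A sa"
  by (intro continuous_at_imp_continuous_on ballI isCont_sa)

lemma sa_step: "t0 \<le> u \<Longrightarrow> v \<le> u + 1 / \<beta> \<Longrightarrow> sa v \<le> sa u + 1 / 2"
proof -
  assume "t0 \<le> u" and v: "v \<le> u + 1 / \<beta>"
  have "a + \<beta> * v / 4 \<le> a + \<beta> * u / 4 + 1 / 4"
    using mult_left_mono[OF v, of \<beta>] beta_pos by (simp add: distrib_left)
  also have "\<dots> \<le> (sa u + 1 / 2)\<^sup>2"
    using sa_sq[OF \<open>t0 \<le> u\<close>] sa_pos[OF \<open>t0 \<le> u\<close>] by (simp add: power2_eq_square algebra_simps)
  finally show ?thesis
    using sa_pos[OF \<open>t0 \<le> u\<close>] by (simp add: s_fun_def real_le_lsqrt)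
qed

lemma window_gain: "t0 \<le> u \<Longrightarrow> 3 * sa u \<le> (sa u)\<^sup>2 / \<beta>"
proof -
  assume "t0 \<le> u"
  then have "3 * \<beta> * sa u \<le> sa u * sa u"
    using sa_ge[of u] sa_pos[of u] by (intro mult_right_mono) auto
  then show ?thesis
    using beta_pos by (simp add: power2_eq_square le_divide_eq algebra_simps)
qed

lemma forcing_le: "t0 \<le> u \<Longrightarrow> u \<le> v \<Longrightarrow> v \<le> u + 1 / \<beta> \<Longrightarrow> \<bar>b v - b u\<bar> \<le> sa u / 8"
proof -
  assume uv: "t0 \<le> u" "u \<le> v" "v \<le> u + 1 / \<beta>"
  have "64 * (b v - b u)\<^sup>2 \<le> (sa u)\<^sup>2"
    using forcing_small[OF uv] large_after_t0[OF uv(1)] beta_mult_nonneg[OF uv(1)] zero_le_power2[of \<beta>]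
      sa_sq[OF uv(1)]
    by linarith
  then have "(b v - b u)\<^sup>2 \<le> (sa u / 8)\<^sup>2"
    by (simp add: power_divide)
  then show ?thesis
    using sa_pos[OF uv(1)] abs_le_square_iff[of "b v - b u" "sa u / 8"] by simp
qed

text \<open>During the first window the path may still be on its way up from \<open>Z t0 = 0\<close>, so there
  the lower barrier is only \<open>- s_a(t0) / 4\<close>.\<close>

definition lower_barrier :: "real \<Rightarrow> real" where
  "lower_barrier u = (if u < t0 + 1 / \<beta> then - (sa t0 / 4) else sa u / 2)"

lemma lower_barrier_ge: "t0 \<le> u \<Longrightarrow> - (sa t0 / 4) \<le> lower_barrier u"
  using sa_pos[of u] sa_pos[of t0] by (simp add: lower_barrier_def)

lemma lower_barrier_le: "t0 \<le> u \<Longrightarrow> lower_barrier u \<le> sa u / 2"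
  using sa_pos[of u] sa_pos[of t0] by (simp add: lower_barrier_def)

lemma lower_barrier_right_continuous: "(lower_barrier \<longlongrightarrow> lower_barrier t) (at_right t)"
proof (cases "t < t0 + 1 / \<beta>")
  case True
  have "\<forall>\<^sub>F u in at_right t. - (sa t0 / 4) = lower_barrier u"
    unfolding eventually_at_right_field using True
    by (auto simp: lower_barrier_def intro!: exI[of _ "t0 + 1 / \<beta>"])
  with tendsto_const have "(lower_barrier \<longlongrightarrow> - (sa t0 / 4)) (at_right t)"
    by (rule Lim_transform_eventually)
  then show ?thesis using True by (simp add: lower_barrier_def)
next
  case False
  have "((\<lambda>u. sa u / 2) \<longlongrightarrow> sa t / 2) (at_right t)"
    using isCont_sa[of t] by (intro tendsto_intros) (auto simp: isCont_def filterlim_at_split)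
  moreover have "\<forall>\<^sub>F u in at_right t. sa u / 2 = lower_barrier u"
    using False by (auto simp: lower_barrier_def eventually_at_filter)
  ultimately have "(lower_barrier \<longlongrightarrow> sa t / 2) (at_right t)"
    by (rule Lim_transform_eventually)
  then show ?thesis using False by (simp add: lower_barrier_def)
qed

end

locale riccati_segment = riccati_forcing +
  fixes T :: real and Z :: "real \<Rightarrow> real"
  assumes solution: "riccati_solution_on b \<beta> a t0 0 T Z"
begin

definition drift :: "real \<Rightarrow> real" where
  "drift u = a + \<beta> * u / 4 - (Z u)\<^sup>2"

lemma Z_t0: "Z t0 = 0"
  using solution by (simp add: riccati_solution_on_def)

lemma Z_continuous_on: "t0 \<le> p \<Longrightarrow> q < T \<Longrightarrow> continuous_on {p..q} Z"
  using solution unfolding riccati_solution_on_def by (auto elim: continuous_on_subset)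

lemma Z_right_continuous: "t0 \<le> t \<Longrightarrow> t < T \<Longrightarrow> (Z \<longlongrightarrow> Z t) (at_right t)"
  using continuous_on_Icc_at_rightD[OF Z_continuous_on[of t "(t + T) / 2"]] by simp

lemma increment: "t0 \<le> p \<Longrightarrow> p \<le> q \<Longrightarrow> q < T \<Longrightarrow> Z q = Z p + integral {p..q} drift + (b q - b p)"
  using solution unfolding riccati_solution_on_def drift_def[abs_def] by force

lemma integral_drift_ge:
  assumes "t0 \<le> p" "p \<le> q" "q < T" "\<And>u. p \<le> u \<Longrightarrow> u \<le> q \<Longrightarrow> m \<le> drift u"
  shows "m * (q - p) \<le> integral {p..q} drift"
proof -
  have "continuous_on {p..q} drift"
    unfolding drift_def[abs_def] using Z_continuous_on assms(1,3) by (intro continuous_intros) auto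
  then have "integral {p..q} (\<lambda>_. m) \<le> integral {p..q} drift"
    using assms(4) by (intro integral_le integrable_continuous_interval) auto
  then show ?thesis using assms(2) by (simp add: mult.commute)
qed

lemma integral_drift_le:
  assumes "t0 \<le> p" "p \<le> q" "q < T" "\<And>u. p \<le> u \<Longrightarrow> u \<le> q \<Longrightarrow> drift u \<le> m"
  shows "integral {p..q} drift \<le> m * (q - p)"
proof -
  have "continuous_on {p..q} drift"
    unfolding drift_def[abs_def] using Z_continuous_on assms(1,3) by (intro continuous_intros) auto
  then have "integral {p..q} drift \<le> integral {p..q} (\<lambda>_. m)"
    using assms(4) by (intro integral_le integrable_continuous_interval) auto
  then show ?thesis using assms(2) by (simp add: mult.commute)
qed

lemma increment_ge:
  assumes "t0 \<le> p" "p \<le> q" "q < T" "q \<le> p + 1 / \<beta>"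
    and "\<And>u. p \<le> u \<Longrightarrow> u \<le> q \<Longrightarrow> m \<le> drift u"
  shows "Z p + m * (q - p) - sa p / 8 \<le> Z q"
  using increment[OF assms(1-3)] integral_drift_ge[OF assms(1-3,5)] forcing_le[OF assms(1,2,4)]
  by linarith

lemma increment_le:
  assumes "t0 \<le> p" "p \<le> q" "q < T" "q \<le> p + 1 / \<beta>"
    and "\<And>u. p \<le> u \<Longrightarrow> u \<le> q \<Longrightarrow> drift u \<le> m"
  shows "Z q \<le> Z p + m * (q - p) + sa p / 8"
  using increment[OF assms(1-3)] integral_drift_le[OF assms(1-3,5)] forcing_le[OF assms(1,2,4)]
  by linarith

lemma drift_eq: "t0 \<le> u \<Longrightarrow> drift u = (sa u)\<^sup>2 - (Z u)\<^sup>2"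
  using sa_sq by (simp add: drift_def)

lemma drift_ge:
  assumes "t0 \<le> p" "p \<le> u" "0 \<le> k" "k \<le> 1" "\<bar>Z u\<bar> \<le> k * sa u"
  shows "(1 - k\<^sup>2) * (sa p)\<^sup>2 \<le> drift u"
proof -
  have "t0 \<le> u" using assms by linarith
  have "(sa p)\<^sup>2 \<le> (sa u)\<^sup>2"
    using sa_mono[OF assms(2)] sa_pos[OF assms(1)] by (intro power_mono) auto
  then have "(1 - k\<^sup>2) * (sa p)\<^sup>2 \<le> (1 - k\<^sup>2) * (sa u)\<^sup>2"
    using assms(3,4) by (intro mult_left_mono) (auto simp: power_le_one)
  also have "\<dots> \<le> (sa u)\<^sup>2 - (Z u)\<^sup>2"
    using assms(5) abs_le_square_iff[of "Z u" "k * sa u"] assms(3) sa_pos[OF \<open>t0 \<le> u\<close>]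
    by (simp add: power_mult_distrib algebra_simps)
  finally show ?thesis using drift_eq[OF \<open>t0 \<le> u\<close>] by simp
qed

lemma drift_le:
  assumes "t0 \<le> p" "p \<le> u" "1 \<le> k" "k * sa u \<le> Z u"
  shows "drift u \<le> (1 - k\<^sup>2) * (sa p)\<^sup>2"
proof -
  have "t0 \<le> u" using assms by linarith
  have "(k * sa u)\<^sup>2 \<le> (Z u)\<^sup>2"
    using assms(3,4) sa_pos[OF \<open>t0 \<le> u\<close>] by (intro power_mono) auto
  then have "(sa u)\<^sup>2 - (Z u)\<^sup>2 \<le> (1 - k\<^sup>2) * (sa u)\<^sup>2"
    by (simp add: power_mult_distrib algebra_simps)
  also have "\<dots> \<le> (1 - k\<^sup>2) * (sa p)\<^sup>2"
    using sa_mono[OF assms(2)] sa_pos[OF assms(1)] assms(3)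
    by (intro mult_left_mono_neg power_mono) (auto simp: one_le_power)
  finally show ?thesis using drift_eq[OF \<open>t0 \<le> u\<close>] by simp
qed

lemma increment_ge_inside:
  assumes "t0 \<le> p" "p \<le> q" "q < T" "q \<le> p + 1 / \<beta>"
    and "\<And>u. p \<le> u \<Longrightarrow> u \<le> q \<Longrightarrow> \<bar>Z u\<bar> \<le> sa u"
  shows "Z p - sa p / 8 \<le> Z q"
proof -
  have "0 \<le> drift u" if "p \<le> u" "u \<le> q" for u
    using drift_ge[OF assms(1) that(1), of 1] assms(5)[OF that] by simp
  then show ?thesis using increment_ge[OF assms(1-4), of 0] by simp
qed

lemma increment_le_above:
  assumes "t0 \<le> p" "p \<le> q" "q < T" "q \<le> p + 1 / \<beta>"
    and "\<And>u. p \<le> u \<Longrightarrow> u \<le> q \<Longrightarrow> sa u \<le> Z u"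
  shows "Z q \<le> Z p + sa p / 8"
proof -
  have "drift u \<le> 0" if "p \<le> u" "u \<le> q" for u
    using drift_le[OF assms(1) that(1), of 1] assms(5)[OF that] by simp
  then show ?thesis using increment_le[OF assms(1-4), of 0] by simp
qed

lemma rise_over_window:
  assumes "t0 \<le> p" "p + 1 / \<beta> < T"
    and "\<And>u. p \<le> u \<Longrightarrow> u \<le> p + 1 / \<beta> \<Longrightarrow> \<bar>Z u\<bar> \<le> 3 / 4 * sa u"
  shows "Z p + 19 / 16 * sa p \<le> Z (p + 1 / \<beta>)"
proof -
  have "Z p + 7 / 16 * (sa p)\<^sup>2 * (p + 1 / \<beta> - p) - sa p / 8 \<le> Z (p + 1 / \<beta>)"
  proof (rule increment_ge[OF assms(1) _ assms(2)])
    fix u assume "p \<le> u" "u \<le> p + 1 / \<beta>"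
    then show "7 / 16 * (sa p)\<^sup>2 \<le> drift u"
      using drift_ge[OF assms(1) \<open>p \<le> u\<close>, of "3 / 4"] assms(3) by (simp add: power_divide)
  qed (use beta_pos in auto)
  then show ?thesis using window_gain[OF assms(1)] by simp
qed

lemma fall_over_window:
  assumes "t0 \<le> p" "p + 1 / \<beta> < T"
    and "\<And>u. p \<le> u \<Longrightarrow> u \<le> p + 1 / \<beta> \<Longrightarrow> 5 / 4 * sa u \<le> Z u"
  shows "Z (p + 1 / \<beta>) \<le> Z p - 25 / 16 * sa p"
proof -
  have "Z (p + 1 / \<beta>) \<le> Z p + (- 9 / 16 * (sa p)\<^sup>2) * (p + 1 / \<beta> - p) + sa p / 8"
  proof (rule increment_le[OF assms(1) _ assms(2)])
    fix u assume "p \<le> u" "u \<le> p + 1 / \<beta>"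
    then show "drift u \<le> - 9 / 16 * (sa p)\<^sup>2"
      using drift_le[OF assms(1) \<open>p \<le> u\<close>, of "5 / 4"] assms(3) by (simp add: power_divide)
  qed (use beta_pos in auto)
  then show ?thesis using window_gain[OF assms(1)] by simp
qed

lemma floor_before_lower_violation:
  assumes "t0 \<le> t1" "t1 < T" and before: "\<And>u. t0 \<le> u \<Longrightarrow> u < t1 \<Longrightarrow> lower_barrier u \<le> Z u"
    and "t0 \<le> u" "u \<le> t1"
  shows "- (sa t0 / 4) \<le> Z u"
proof (cases "u < t1")
  case True
  then show ?thesis using before[OF assms(4) True] lower_barrier_ge[OF assms(4)] by linarith
next
  case False
  show ?thesis
  proof (cases "t0 < t1")
    case True
    have "continuous_on (closure {t0..<t1}) Z" using Z_continuous_on[of t0 t1] assms(2) True by simp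
    moreover have "u \<in> closure {t0..<t1}" using False assms(5) True by simp
    ultimately show ?thesis
    proof (rule continuous_ge_on_closure)
      fix x assume "x \<in> {t0..<t1}"
      then show "- (sa t0 / 4) \<le> Z x" using before[of x] lower_barrier_ge[of x] by force
    qed
  next
    case False
    then show ?thesis using assms Z_t0 sa_pos[of t0] \<open>\<not> u < t1\<close> by simp
  qed
qed

lemma lower_barrier_step:
  assumes t1: "t0 \<le> t1" "t1 < T" and before: "\<And>u. t0 \<le> u \<Longrightarrow> u < t1 \<Longrightarrow> lower_barrier u \<le> Z u"
  shows "lower_barrier t1 < Z t1"
proof -
  have floor: "- (sa u / 4) \<le> Z u" "- (sa t0 / 4) \<le> Z u" if "t0 \<le> u" "u \<le> t1" for u
    using floor_before_lower_violation[OF t1 before that] sa_mono[OF that(1)] by simp_all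
  define p0 where "p0 = max t0 (t1 - 1 / \<beta>)"
  have p0: "t0 \<le> p0" "p0 \<le> t1" "t1 \<le> p0 + 1 / \<beta>" using t1(1) beta_pos by (auto simp: p0_def)
  have "continuous_on {p0..t1} (\<lambda>u. 3 / 4 * sa u)" "continuous_on {p0..t1} Z"
    using p0(1) t1(2) by (intro continuous_on_mult_left sa_continuous_on Z_continuous_on)+
  then consider "3 / 4 * sa t1 \<le> Z t1"
    | p where "p0 \<le> p" "p < t1" "3 / 4 * sa p = Z p" "\<And>u. p < u \<Longrightarrow> u \<le> t1 \<Longrightarrow> Z u < 3 / 4 * sa u"
    | "\<And>u. p0 \<le> u \<Longrightarrow> u \<le> t1 \<Longrightarrow> Z u < 3 / 4 * sa u"
    using p0(2) by (rule last_crossing) blast+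
  then show ?thesis
  proof cases
    case 1
    then show ?thesis using lower_barrier_le[OF t1(1)] sa_pos[OF t1(1)] by linarith
  next
    case (2 p)
    have "t0 \<le> p" using 2(1) p0(1) by linarith
    have "Z p - sa p / 8 \<le> Z t1"
    proof (rule increment_ge_inside[OF \<open>t0 \<le> p\<close> _ t1(2)])
      fix u assume "p \<le> u" "u \<le> t1"
      then show "\<bar>Z u\<bar> \<le> sa u"
        using 2(3) 2(4)[of u] floor[of u] sa_pos[of u] \<open>t0 \<le> p\<close> by (cases "u = p") auto
    qed (use 2(1,2) p0(3) in auto)
    moreover have "sa t1 \<le> sa p + 1 / 2" "4 \<le> sa p"
      using sa_step[OF \<open>t0 \<le> p\<close>] sa_ge[OF \<open>t0 \<le> p\<close>] p0(3) 2(1) by auto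
    ultimately show ?thesis using 2(3) lower_barrier_le[OF t1(1)] by linarith
  next
    case 3
    have inside: "\<bar>Z u\<bar> \<le> 3 / 4 * sa u" if "p0 \<le> u" "u \<le> t1" for u
      using 3[OF that] floor[of u] sa_pos[of u] p0(1) that by force
    show ?thesis
    proof (cases "t1 < t0 + 1 / \<beta>")
      case True
      have "Z t0 - sa t0 / 8 \<le> Z t1"
        using inside sa_pos True t1 p0 by (intro increment_ge_inside) (force simp: p0_def)+
      then show ?thesis using True Z_t0 sa_pos[of t0] by (simp add: lower_barrier_def)
    next
      case False
      then have "t1 = p0 + 1 / \<beta>" by (simp add: p0_def)
      then have "Z p0 + 19 / 16 * sa p0 \<le> Z t1"
        using rise_over_window[OF p0(1)] inside t1(2) by simp
      moreover have "sa t1 \<le> sa p0 + 1 / 2" "4 \<le> sa p0"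
        using sa_step[OF p0(1) p0(3)] sa_ge[OF p0(1)] by auto
      ultimately show ?thesis using floor(1)[OF p0(1,2)] lower_barrier_le[OF t1(1)] by linarith
    qed
  qed
qed

lemma upper_barrier_step:
  assumes t1: "t0 \<le> t1" "t1 < T" and before: "\<And>u. t0 \<le> u \<Longrightarrow> u < t1 \<Longrightarrow> Z u \<le> 3 / 2 * sa u"
  shows "Z t1 < 3 / 2 * sa t1"
proof -
  define p0 where "p0 = max t0 (t1 - 1 / \<beta>)"
  have p0: "t0 \<le> p0" "p0 \<le> t1" "t1 \<le> p0 + 1 / \<beta>" using t1(1) beta_pos by (auto simp: p0_def)
  have "continuous_on {p0..t1} Z"
    using p0(1) t1(2) by (rule Z_continuous_on)
  moreover have "continuous_on {p0..t1} (\<lambda>u. 5 / 4 * sa u)"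
    by (intro continuous_on_mult_left sa_continuous_on)
  ultimately consider "Z t1 \<le> 5 / 4 * sa t1"
    | p where "p0 \<le> p" "p < t1" "Z p = 5 / 4 * sa p" "\<And>u. p < u \<Longrightarrow> u \<le> t1 \<Longrightarrow> 5 / 4 * sa u < Z u"
    | "\<And>u. p0 \<le> u \<Longrightarrow> u \<le> t1 \<Longrightarrow> 5 / 4 * sa u < Z u"
    using p0(2) by (rule last_crossing) blast+
  then show ?thesis
  proof cases
    case 1
    then show ?thesis using sa_pos[OF t1(1)] by linarith
  next
    case (2 p)
    have "t0 \<le> p" using 2(1) p0(1) by linarith
    have "Z t1 \<le> Z p + sa p / 8"
    proof (rule increment_le_above[OF \<open>t0 \<le> p\<close> _ t1(2)])
      fix u assume "p \<le> u" "u \<le> t1"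
      then show "sa u \<le> Z u"
        using 2(3) 2(4)[of u] sa_pos[of u] \<open>t0 \<le> p\<close> by (cases "u = p") auto
    qed (use 2(1,2) p0(3) in auto)
    moreover have "sa p \<le> sa t1" "0 < sa p" using sa_mono 2(2) sa_pos[OF \<open>t0 \<le> p\<close>] by auto
    ultimately show ?thesis using 2(3) by linarith
  next
    case 3
    have "p0 \<noteq> t0" using 3[of t0] Z_t0 sa_pos[of t0] p0 by auto
    then have window: "t1 = p0 + 1 / \<beta>" "p0 < t1" using beta_pos by (auto simp: p0_def)
    then have "Z t1 \<le> Z p0 - 25 / 16 * sa p0"
      using fall_over_window[OF p0(1)] 3 t1(2) by (simp add: less_imp_le)
    then show ?thesis using before[OF p0(1) window(2)] sa_pos[OF p0(1)] sa_pos[OF t1(1)] by linarith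
  qed
qed

lemma stays_in_band:
  assumes "t0 \<le> t" "t < T"
  shows "lower_barrier t \<le> Z t" "Z t \<le> 3 / 2 * sa t"
proof -
  have "0 \<le> Z t - lower_barrier t"
    using assms lower_barrier_step
    by (intro continuous_induction_nonneg[of t0 T "\<lambda>u. Z u - lower_barrier u"])
       (auto intro!: tendsto_intros Z_right_continuous lower_barrier_right_continuous)
  then show "lower_barrier t \<le> Z t" by simp
  have "0 \<le> 3 / 2 * sa t - Z t"
    using assms upper_barrier_step isCont_sa
    by (intro continuous_induction_nonneg[of t0 T "\<lambda>u. 3 / 2 * sa u - Z u"])
       (auto intro!: tendsto_intros Z_right_continuous simp: isCont_def filterlim_at_split)
  then show "Z t \<le> 3 / 2 * sa t" by simp
qed

lemma bounded_below: "t0 \<le> t \<Longrightarrow> t < T \<Longrightarrow> - (sa t0 / 4) \<le> Z t"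
  using stays_in_band(1) lower_barrier_ge by (meson order_trans)

end

context riccati_forcing
begin

lemma diffusion_path_band:
  assumes path: "diffusion_path b \<beta> a t0 0 Z" and t: "t0 + 1 / \<beta> \<le> t"
  shows "sa t / 2 \<le> Z t \<and> Z t \<le> 3 / 2 * sa t"
proof -
  have "t0 \<le> t" using t divide_pos_pos[OF zero_less_one beta_pos] by linarith
  from path show ?thesis
  proof (cases rule: diffusion_path_until_explosion)
    case 1
    interpret riccati_segment \<beta> a t0 b "t + 1" Z by unfold_locales (rule 1)
    show ?thesis using stays_in_band[of t] \<open>t0 \<le> t\<close> t by (simp add: lower_barrier_def)
  next
    case (2 T)
    interpret riccati_segment \<beta> a t0 b T Z by unfold_locales (rule 2(2))
    have "\<forall>\<^sub>F u in at_left T. Z u \<le> - (sa t0 / 4) - 1"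
      using 2(3) by (simp add: filterlim_at_bot)
    moreover have "\<forall>\<^sub>F u in at_left T. t0 < u \<and> u < T"
      unfolding eventually_at_left_field using 2(1) by blast
    ultimately have "\<forall>\<^sub>F u in at_left T. False"
    proof eventually_elim
      case (elim u)
      then show False using bounded_below[of u] by linarith
    qed
    then show ?thesis by (simp add: trivial_limit_at_left_real)
  qed
qed

end

section \<open>Dyadic chaining\<close>

definition dyadic_point :: "real \<Rightarrow> real \<Rightarrow> nat \<Rightarrow> nat \<Rightarrow> real" where
  "dyadic_point x0 L n j = x0 + L * real j / 2 ^ n"

lemma dyadic_point_0 [simp]: "dyadic_point x0 L n 0 = x0"
  by (simp add: dyadic_point_def)

lemma dyadic_point_double [simp]: "dyadic_point x0 L (Suc n) (2 * j) = dyadic_point x0 L n j"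
  by (simp add: dyadic_point_def)

lemma dyadic_point_mem: "0 \<le> L \<Longrightarrow> j \<le> 2 ^ n \<Longrightarrow> dyadic_point x0 L n j \<in> {x0..x0 + L}"
proof -
  assume "0 \<le> L" "j \<le> 2 ^ n"
  then have "real j / 2 ^ n \<le> 1"
    by (simp add: divide_le_eq_1)
  then show ?thesis
    using \<open>0 \<le> L\<close> mult_left_le[of "real j / 2 ^ n" L] by (simp add: dyadic_point_def)
qed

lemma dyadic_chaining_partial:
  fixes f :: "real \<Rightarrow> real" and y :: "nat \<Rightarrow> real"
  assumes step: "\<And>n j. j < 2 ^ n \<Longrightarrow>
      \<bar>f (dyadic_point x0 L n (Suc j)) - f (dyadic_point x0 L n j)\<bar> \<le> y n"
  shows "j \<le> 2 ^ n \<Longrightarrow> \<bar>f (dyadic_point x0 L n j) - f x0\<bar> \<le> (\<Sum>i\<le>n. y i)"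
proof (induction n arbitrary: j)
  case 0
  then consider "j = 0" | "j = 1" by fastforce
  then show ?case
    using step[of 0 0] by cases (auto intro: order_trans[OF abs_ge_zero])
next
  case (Suc n)
  have "0 \<le> y (Suc n)" using step[of 0 "Suc n"] by (auto intro: order_trans[OF abs_ge_zero])
  obtain i where "j = 2 * i \<or> j = Suc (2 * i)" by (metis oddE evenE Suc_eq_plus1)
  then show ?case
  proof
    assume "j = 2 * i"
    then show ?case using Suc.IH[of i] Suc.prems \<open>0 \<le> y (Suc n)\<close> by simp
  next
    assume j: "j = Suc (2 * i)"
    then have "i < 2 ^ n" using Suc.prems by simp
    then show ?case using Suc.IH[of i] step[of "2 * i" "Suc n"] j by simp
  qed
qed

lemma dyadic_point_floor_bounds:
  fixes n :: nat
  assumes "0 < L" "x0 \<le> x" "x \<le> x0 + L"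
  defines "j \<equiv> nat \<lfloor>(x - x0) / L * 2 ^ n\<rfloor>"
  shows "j \<le> 2 ^ n" "x - L / 2 ^ n \<le> dyadic_point x0 L n j" "dyadic_point x0 L n j \<le> x"
proof -
  define r where "r = (x - x0) / L"
  have r: "0 \<le> r" "r \<le> 1" using assms(1-3) by (auto simp: r_def field_simps)
  have "real j = of_int \<lfloor>r * 2 ^ n\<rfloor>"
    unfolding j_def r_def[symmetric] using r(1) by (intro of_nat_nat) simp
  then have j: "real j \<le> r * 2 ^ n" "r * 2 ^ n - 1 \<le> real j"
    using of_int_floor_le[of "r * 2 ^ n"] real_of_int_floor_gt_diff_one[of "r * 2 ^ n"] by linarith+
  have "r * 2 ^ n \<le> 2 ^ n" using mult_right_mono[OF r(2), of "2 ^ n"] by simp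
  then have "real j \<le> 2 ^ n" using j(1) by linarith
  then show "j \<le> 2 ^ n" by (metis of_nat_le_iff of_nat_numeral of_nat_power)
  have "L * real j / 2 ^ n \<le> L * (r * 2 ^ n) / 2 ^ n"
    using j(1) assms(1) by (intro divide_right_mono mult_left_mono) auto
  then show "dyadic_point x0 L n j \<le> x" using assms(1) by (simp add: dyadic_point_def r_def)
  have "L * (r * 2 ^ n - 1) / 2 ^ n \<le> L * real j / 2 ^ n"
    using j(2) assms(1) by (intro divide_right_mono mult_left_mono) auto
  moreover have "L * (r * 2 ^ n - 1) / 2 ^ n = x - x0 - L / 2 ^ n"
    using assms(1) by (simp add: r_def diff_divide_distrib right_diff_distrib)
  ultimately show "x - L / 2 ^ n \<le> dyadic_point x0 L n j" by (simp add: dyadic_point_def)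
qed

lemma dyadic_approximation:
  assumes "0 < L" "x0 \<le> x" "x \<le> x0 + L"
  obtains j where "\<And>n. j n \<le> 2 ^ n" "(\<lambda>n. dyadic_point x0 L n (j n)) \<longlonglongrightarrow> x"
proof -
  define j where "j n = nat \<lfloor>(x - x0) / L * 2 ^ n\<rfloor>" for n :: nat
  note bounds = dyadic_point_floor_bounds[OF assms, folded j_def]
  have "\<forall>\<^sub>F n in sequentially. x - L / 2 ^ n \<le> dyadic_point x0 L n (j n)"
    using bounds(2) by (intro always_eventually allI)
  moreover have "\<forall>\<^sub>F n in sequentially. dyadic_point x0 L n (j n) \<le> x"
    using bounds(3) by (intro always_eventually allI)
  moreover have "(\<lambda>n. x - L / 2 ^ n) \<longlonglongrightarrow> x"
    using tendsto_diff[OF tendsto_const tendsto_divide_0[OF tendsto_const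
        filterlim_realpow_sequentially_gt1[of "2 :: real"]], of x L]
    by simp
  ultimately have "(\<lambda>n. dyadic_point x0 L n (j n)) \<longlonglongrightarrow> x"
    using tendsto_const by (rule tendsto_sandwich)
  with bounds(1) show thesis by (rule that)
qed

lemma dyadic_chaining:
  fixes f :: "real \<Rightarrow> real" and y :: "nat \<Rightarrow> real"
  assumes "0 < L" and cont: "continuous_on {x0..x0 + L} f" and "summable y"
    and step: "\<And>n j. j < 2 ^ n \<Longrightarrow>
      \<bar>f (dyadic_point x0 L n (Suc j)) - f (dyadic_point x0 L n j)\<bar> \<le> y n"
    and x: "x0 \<le> x" "x \<le> x0 + L"
  shows "\<bar>f x - f x0\<bar> \<le> suminf y"
proof -
  have "0 \<le> y n" for n using step[of 0 n] by (auto intro: order_trans[OF abs_ge_zero])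
  obtain j where j: "\<And>n. j n \<le> 2 ^ n" and lim: "(\<lambda>n. dyadic_point x0 L n (j n)) \<longlonglongrightarrow> x"
    using dyadic_approximation[OF assms(1) x] by blast
  have "\<forall>n. dyadic_point x0 L n (j n) \<in> {x0..x0 + L}"
    using dyadic_point_mem[OF less_imp_le[OF \<open>0 < L\<close>] j] by blast
  then have "(\<lambda>n. f (dyadic_point x0 L n (j n))) \<longlonglongrightarrow> f x"
    using x by (intro continuous_on_tendsto_compose[OF cont lim _ always_eventually]) auto
  then have "(\<lambda>n. \<bar>f (dyadic_point x0 L n (j n)) - f x0\<bar>) \<longlonglongrightarrow> \<bar>f x - f x0\<bar>"
    by (intro tendsto_intros)
  moreover have "\<forall>n. \<bar>f (dyadic_point x0 L n (j n)) - f x0\<bar> \<le> suminf y"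
    using dyadic_chaining_partial[OF step j] sum_le_suminf[OF \<open>summable y\<close>, of "{..n}" for n]
      \<open>\<And>n. 0 \<le> y n\<close>
    by (meson finite_atMost order_trans)
  ultimately show ?thesis
    by (rule tendsto_upperbound[OF _ always_eventually trivial_limit_sequentially])
qed

section \<open>Brownian paths with small increments\<close>

lemma eventually_high_probability:
  assumes "prob_space M" "(\<lambda>k. measure M (A k)) \<longlonglongrightarrow> 0" "\<And>k. A k \<in> sets M"
    and "\<forall>\<^sub>F k in sequentially. Q k" "\<And>k. Q k \<Longrightarrow> space M - A k \<subseteq> G k"
  shows "\<forall>\<epsilon>>0. \<forall>\<^sub>F k in sequentially. \<exists>E\<in>sets M. measure M E \<ge> 1 - \<epsilon> \<and> E \<subseteq> G k"
proof (intro allI impI)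
  fix \<epsilon> :: real assume "\<epsilon> > 0"
  interpret prob_space M by (rule assms(1))
  have "\<forall>\<^sub>F k in sequentially. measure M (A k) < \<epsilon>"
    using order_tendstoD(2)[OF assms(2) \<open>\<epsilon> > 0\<close>] .
  with assms(4) show "\<forall>\<^sub>F k in sequentially. \<exists>E\<in>sets M. measure M E \<ge> 1 - \<epsilon> \<and> E \<subseteq> G k"
  proof eventually_elim
    case (elim k)
    then have "1 - \<epsilon> \<le> measure M (space M - A k)" using prob_compl[OF assms(3)] by simp
    then show ?case using assms(3)[of k] assms(5)[OF elim(1)] by blast
  qed
qed

lemma brownian_increment_tail:
  assumes "brownian_motion M B" "0 \<le> s" "s < t" "0 < y"
  shows "measure M {\<omega>\<in>space M. y < \<bar>B t \<omega> - B s \<omega>\<bar>} \<le> 3 * (t - s)\<^sup>2 / y ^ 4"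
proof -
  interpret prob_space M using assms(1) by (simp add: brownian_motion_def)
  define X where "X = (\<lambda>\<omega>. B t \<omega> - B s \<omega>)"
  define \<sigma> where "\<sigma> = sqrt (t - s)"
  have "0 < \<sigma>" "\<sigma>\<^sup>2 = t - s" using assms(3) by (simp_all add: \<sigma>_def)
  have D: "distributed M lborel X (\<lambda>x. ennreal (normal_density 0 \<sigma> x))"
    using assms(1-3) unfolding brownian_motion_def X_def \<sigma>_def by blast
  have "has_bochner_integral lborel (\<lambda>x. normal_density 0 \<sigma> x * x ^ 4) (3 * (\<sigma>\<^sup>2)\<^sup>2)"
    using normal_moment_even[OF \<open>0 < \<sigma>\<close>, of 0 2] by (simp add: fact_numeral field_simps)
  then have moment: "has_bochner_integral lborel (\<lambda>x. normal_density 0 \<sigma> x * x ^ 4) (3 * (t - s)\<^sup>2)"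
    unfolding \<open>\<sigma>\<^sup>2 = t - s\<close> .
  have "integrable M (\<lambda>\<omega>. (X \<omega>) ^ 4)"
    using distributed_integrable[OF D, of "\<lambda>x. x ^ 4"] moment by (auto simp: has_bochner_integral_iff)
  then have "measure M {\<omega>\<in>space M. y ^ 4 \<le> (X \<omega>) ^ 4} \<le> (LINT \<omega>|M. (X \<omega>) ^ 4) / y ^ 4"
    using assms(4) by (intro integral_Markov_inequality_measure[where A = "space M"]) auto
  also have "(LINT \<omega>|M. (X \<omega>) ^ 4) = 3 * (t - s)\<^sup>2"
    using distributed_integral[OF D, of "\<lambda>x. x ^ 4"] has_bochner_integral_integral_eq[OF moment] by simp
  finally have "measure M {\<omega>\<in>space M. y ^ 4 \<le> (X \<omega>) ^ 4} \<le> 3 * (t - s)\<^sup>2 / y ^ 4" .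
  moreover have "{\<omega>\<in>space M. y < \<bar>X \<omega>\<bar>} \<subseteq> {\<omega>\<in>space M. y ^ 4 \<le> (X \<omega>) ^ 4}"
    using assms(4) power_mono[of y "\<bar>X _\<bar>" 4] by (auto simp: power_even_abs_numeral)
  moreover have "{\<omega>\<in>space M. y ^ 4 \<le> (X \<omega>) ^ 4} \<in> sets M"
  proof -
    have "X \<in> borel_measurable M" using distributed_measurable[OF D] by simp
    then show ?thesis by measurable
  qed
  ultimately show ?thesis unfolding X_def by (meson finite_measure_mono order_trans)
qed

definition dyadic_level_exceedance ::
  "'a measure \<Rightarrow> (real \<Rightarrow> 'a \<Rightarrow> real) \<Rightarrow> real \<Rightarrow> real \<Rightarrow> real \<Rightarrow> nat \<Rightarrow> 'a set" where
  "dyadic_level_exceedance M B x0 L \<delta> n = (\<Union>j<2 ^ n. {\<omega> \<in> space M.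
     \<delta> * (9 / 10) ^ n < \<bar>B (dyadic_point x0 L n (Suc j)) \<omega> - B (dyadic_point x0 L n j) \<omega>\<bar>})"

text \<open>The thresholds \<open>\<delta> (9/10)^n\<close> are summable, yet decay slowly enough for the fourth-moment
  bounds of the \<open>2^n\<close> increments at level \<open>n\<close> to add up to a geometric series of ratio
  \<open>1 / (2 (9/10)^4) = 5000/6561 < 1\<close>.\<close>

definition dyadic_exceedance ::
  "'a measure \<Rightarrow> (real \<Rightarrow> 'a \<Rightarrow> real) \<Rightarrow> real \<Rightarrow> real \<Rightarrow> real \<Rightarrow> 'a set" where
  "dyadic_exceedance M B x0 L \<delta> = (\<Union>n. dyadic_level_exceedance M B x0 L \<delta> n)"

lemma dyadic_level_exceedance_sets:
  assumes "brownian_motion M B" "0 \<le> x0" "0 \<le> L"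
  shows "dyadic_level_exceedance M B x0 L \<delta> n \<in> sets M"
proof -
  have [measurable]: "B (dyadic_point x0 L n j) \<in> borel_measurable M" for j
    using assms by (simp add: brownian_motion_def dyadic_point_def)
  show ?thesis unfolding dyadic_level_exceedance_def by measurable
qed

lemma dyadic_exceedance_sets:
  "brownian_motion M B \<Longrightarrow> 0 \<le> x0 \<Longrightarrow> 0 \<le> L \<Longrightarrow> dyadic_exceedance M B x0 L \<delta> \<in> sets M"
  unfolding dyadic_exceedance_def by (intro sets.countable_UN) (auto intro: dyadic_level_exceedance_sets)

lemma measure_dyadic_increment_exceeds:
  assumes "brownian_motion M B" "0 \<le> x0" "0 < L" "0 < y"
  shows "measure M {\<omega> \<in> space M. y < \<bar>B (dyadic_point x0 L n (Suc j)) \<omega> - B (dyadic_point x0 L n j) \<omega>\<bar>}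
           \<le> 3 * (L / 2 ^ n)\<^sup>2 / y ^ 4"
proof -
  let ?s = "dyadic_point x0 L n j" and ?t = "dyadic_point x0 L n (Suc j)"
  have "?t - ?s = L / 2 ^ n"
    by (simp add: dyadic_point_def add_divide_distrib distrib_left)
  moreover have "0 < L / 2 ^ n" using assms(3) by simp
  ultimately have "?s < ?t" "?t - ?s = L / 2 ^ n" by linarith+
  moreover have "0 \<le> ?s" using assms(2,3) by (simp add: dyadic_point_def)
  ultimately show ?thesis using brownian_increment_tail[OF assms(1) _ _ assms(4), of ?s ?t] by simp
qed

lemma power_commute_exponents: "((x :: real) ^ n) ^ k = (x ^ k) ^ n"
  by (simp flip: power_mult add: mult.commute)

lemma measure_dyadic_level_exceedance:
  assumes "brownian_motion M B" "0 \<le> x0" "0 < L" "0 < \<delta>"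
  shows "measure M (dyadic_level_exceedance M B x0 L \<delta> n) \<le> 3 * L\<^sup>2 / \<delta> ^ 4 * (5000 / 6561) ^ n"
proof -
  interpret prob_space M using assms(1) by (simp add: brownian_motion_def)
  have [measurable]: "B (dyadic_point x0 L n j) \<in> borel_measurable M" for j
    using assms by (simp add: brownian_motion_def dyadic_point_def)
  have "measure M (dyadic_level_exceedance M B x0 L \<delta> n)
      \<le> (\<Sum>j<(2::nat) ^ n. 3 * (L / 2 ^ n)\<^sup>2 / (\<delta> * (9 / 10) ^ n) ^ 4)"
    unfolding dyadic_level_exceedance_def using assms(4)
    by (intro order_trans[OF finite_measure_subadditive_finite] sum_mono
        measure_dyadic_increment_exceeds[OF assms(1-3)]) auto
  also have "\<dots> = 2 ^ n * (3 * (L / 2 ^ n)\<^sup>2 / (\<delta> * (9 / 10) ^ n) ^ 4)"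
    by simp
  also have "\<dots> = 3 * L\<^sup>2 / \<delta> ^ 4 * (5000 / 6561) ^ n"
  proof -
    have "(\<delta> * (9 / 10) ^ n) ^ 4 = \<delta> ^ 4 * (6561 / 10000) ^ n"
      by (simp add: power_mult_distrib power_commute_exponents[of _ n 4] power_divide)
    moreover have "(5000 / 6561 :: real) ^ n = 1 / (2 ^ n * (6561 / 10000) ^ n)"
      by (simp add: power_mult_distrib[symmetric] power_one_over[symmetric])
    moreover have "P * (3 * (L / P)\<^sup>2 / (\<delta> ^ 4 * Q)) = 3 * L\<^sup>2 / \<delta> ^ 4 * (1 / (P * Q))"
      if "0 < P" "0 < Q" for P Q :: real
      using that assms(4) by (simp add: field_simps power2_eq_square)
    ultimately show ?thesis by simp
  qed
  finally show ?thesis .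
qed

lemma measure_dyadic_exceedance:
  assumes "brownian_motion M B" "0 \<le> x0" "0 < L" "0 < \<delta>"
  shows "measure M (dyadic_exceedance M B x0 L \<delta>) \<le> 3 * L\<^sup>2 / \<delta> ^ 4 * (6561 / 1561)"
proof -
  interpret prob_space M using assms(1) by (simp add: brownian_motion_def)
  let ?level = "dyadic_level_exceedance M B x0 L \<delta>"
  let ?bound = "\<lambda>n. 3 * L\<^sup>2 / \<delta> ^ 4 * (5000 / 6561 :: real) ^ n"
  have level: "measure M (?level n) \<le> ?bound n" for n
    using measure_dyadic_level_exceedance[OF assms] .
  have "summable ?bound" by (intro summable_mult summable_geometric) simp
  have "summable (\<lambda>n. measure M (?level n))"
    by (rule summable_comparison_test'[OF \<open>summable ?bound\<close>, where N = 0]) (use level in simp)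
  then have "measure M (dyadic_exceedance M B x0 L \<delta>) \<le> (\<Sum>n. measure M (?level n))"
    unfolding dyadic_exceedance_def using dyadic_level_exceedance_sets[OF assms(1,2)] assms(3)
    by (intro finite_measure_subadditive_countably) auto
  also have "\<dots> \<le> (\<Sum>n. ?bound n)"
    using level \<open>summable (\<lambda>n. measure M (?level n))\<close> \<open>summable ?bound\<close> by (rule suminf_le)
  also have "\<dots> = 3 * L\<^sup>2 / \<delta> ^ 4 * (6561 / 1561)"
    by (subst suminf_mult) (simp_all add: suminf_geometric)
  finally show ?thesis .
qed

lemma oscillation_outside_dyadic_exceedance:
  assumes "brownian_motion M B" "\<omega> \<in> space M" "\<omega> \<notin> dyadic_exceedance M B x0 L \<delta>"
    and "0 \<le> x0" "0 < L" "u \<in> {x0..x0 + L}" "v \<in> {x0..x0 + L}"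
  shows "\<bar>B v \<omega> - B u \<omega>\<bar> \<le> 20 * \<delta>"
proof -
  have "continuous_on {0..} (\<lambda>t. B t \<omega>)"
    using assms(1,2) by (simp add: brownian_motion_def)
  then have cont: "continuous_on {x0..x0 + L} (\<lambda>t. B t \<omega>)"
    by (rule continuous_on_subset) (use assms(4) in auto)
  have step: "\<bar>B (dyadic_point x0 L n (Suc j)) \<omega> - B (dyadic_point x0 L n j) \<omega>\<bar> \<le> \<delta> * (9 / 10) ^ n"
    if "j < 2 ^ n" for n j
    using assms(2,3) that by (auto simp: dyadic_exceedance_def dyadic_level_exceedance_def not_less)
  have "summable (\<lambda>n. \<delta> * (9 / 10 :: real) ^ n)"
    by (intro summable_mult summable_geometric) simp
  moreover have "(\<Sum>n. \<delta> * (9 / 10 :: real) ^ n) = 10 * \<delta>"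
    by (subst suminf_mult) (simp_all add: suminf_geometric)
  ultimately have "\<bar>B w \<omega> - B x0 \<omega>\<bar> \<le> 10 * \<delta>" if "w \<in> {x0..x0 + L}" for w
    using dyadic_chaining[OF assms(5) cont _ step, of w] that by simp
  from this[OF assms(6)] this[OF assms(7)] show ?thesis by linarith
qed

text \<open>The windows \<open>[m/\<beta>, (m+2)/\<beta>]\<close> overlap, so each interval \<open>[u, u + 1/\<beta>]\<close> with
  \<open>m \<le> \<beta> u < m + 1\<close> lies in one of them, and the threshold is chosen so that the resulting
  oscillation bound \<open>20 \<surd>(m/204800)\<close> squares to \<open>m/512 \<le> \<beta> u / 512\<close>.\<close>

definition window_exceedance :: "'a measure \<Rightarrow> (real \<Rightarrow> 'a \<Rightarrow> real) \<Rightarrow> real \<Rightarrow> nat \<Rightarrow> 'a set" where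
  "window_exceedance M B \<beta> m = dyadic_exceedance M B (real m / \<beta>) (2 / \<beta>) (sqrt (real m / 204800))"

definition irregular_paths :: "'a measure \<Rightarrow> (real \<Rightarrow> 'a \<Rightarrow> real) \<Rightarrow> real \<Rightarrow> nat \<Rightarrow> 'a set" where
  "irregular_paths M B \<beta> k0 = (\<Union>m. window_exceedance M B \<beta> (m + k0))"

lemma irregular_paths_sets:
  "brownian_motion M B \<Longrightarrow> 0 < \<beta> \<Longrightarrow> irregular_paths M B \<beta> k0 \<in> sets M"
  unfolding irregular_paths_def window_exceedance_def
  by (intro sets.countable_UN) (auto intro!: dyadic_exceedance_sets)

lemma measure_window_exceedance:
  assumes "brownian_motion M B" "0 < \<beta>" "1 \<le> m"
  shows "measure M (window_exceedance M B \<beta> m) \<le> 12 * 204800\<^sup>2 * (6561 / 1561) / (\<beta>\<^sup>2 * (real m)\<^sup>2)"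
proof -
  have "measure M (window_exceedance M B \<beta> m)
      \<le> 3 * (2 / \<beta>)\<^sup>2 / (sqrt (real m / 204800)) ^ 4 * (6561 / 1561)"
    unfolding window_exceedance_def using assms by (intro measure_dyadic_exceedance) auto
  also have "(sqrt (real m / 204800)) ^ 4 = (real m)\<^sup>2 / 204800\<^sup>2"
    using power_mult[of "sqrt (real m / 204800)" 2 2] by (simp add: power_divide)
  also have "3 * (2 / \<beta>)\<^sup>2 / ((real m)\<^sup>2 / 204800\<^sup>2) * (6561 / 1561)
      = 12 * 204800\<^sup>2 * (6561 / 1561) / (\<beta>\<^sup>2 * (real m)\<^sup>2)"
    using assms(2,3) by (simp add: power_divide field_simps)
  finally show ?thesis .
qed

lemma small_increments_off_irregular_paths:
  assumes "brownian_motion M B" "0 < \<beta>" "\<omega> \<in> space M" "\<omega> \<notin> irregular_paths M B \<beta> k0"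
    and "real k0 / \<beta> \<le> u" "u \<le> v" "v \<le> u + 1 / \<beta>"
  shows "(B v \<omega> - B u \<omega>)\<^sup>2 \<le> \<beta> * u / 512"
proof -
  define m where "m = nat \<lfloor>\<beta> * u\<rfloor>"
  have "real k0 \<le> \<beta> * u" using assms(2,5) by (simp add: field_simps)
  then have m: "real m \<le> \<beta> * u" "\<beta> * u < real m + 1" "k0 \<le> m"
    by (auto simp: m_def le_nat_floor)
  have "\<omega> \<notin> window_exceedance M B \<beta> m"
    using assms(4) m(3) unfolding irregular_paths_def by (metis UNIV_I UN_I le_add_diff_inverse2)
  moreover have "u \<in> {real m / \<beta>..real m / \<beta> + 2 / \<beta>}" "v \<in> {real m / \<beta>..real m / \<beta> + 2 / \<beta>}"
  proof -
    have "real m / \<beta> \<le> u" using m(1) assms(2) by (simp add: pos_divide_le_eq mult.commute)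
    moreover have "u < real m / \<beta> + 1 / \<beta>" using m(2) assms(2) by (simp add: field_simps)
    ultimately show "u \<in> {real m / \<beta>..real m / \<beta> + 2 / \<beta>}" "v \<in> {real m / \<beta>..real m / \<beta> + 2 / \<beta>}"
      using assms(2,6,7) by auto
  qed
  ultimately have "\<bar>B v \<omega> - B u \<omega>\<bar> \<le> 20 * sqrt (real m / 204800)"
    using oscillation_outside_dyadic_exceedance[OF assms(1,3)] assms(2)
    unfolding window_exceedance_def by simp
  then have "(B v \<omega> - B u \<omega>)\<^sup>2 \<le> (20 * sqrt (real m / 204800))\<^sup>2"
    using abs_le_square_iff[of "B v \<omega> - B u \<omega>" "20 * sqrt (real m / 204800)"] by simp
  also have "\<dots> = real m / 512"
    by (simp add: power_mult_distrib)
  finally show ?thesis using m(1) by simp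
qed

lemma measure_irregular_paths_tendsto_0:
  assumes "brownian_motion M B" "0 < \<beta>"
  shows "(\<lambda>k0. measure M (irregular_paths M B \<beta> k0)) \<longlonglongrightarrow> 0"
proof -
  interpret prob_space M using assms(1) by (simp add: brownian_motion_def)
  define c where "c = 12 * 204800\<^sup>2 * (6561 / 1561) / \<beta>\<^sup>2"
  have summable: "summable (\<lambda>m. c / (real m)\<^sup>2)"
    using summable_mult[OF inverse_power_summable[of 2], of c] by (simp add: divide_inverse)
  have tail_bound: "measure M (irregular_paths M B \<beta> k0) \<le> (\<Sum>m. c / (real (m + k0))\<^sup>2)"
    if "1 \<le> k0" for k0
  proof -
    have bound: "measure M (window_exceedance M B \<beta> (m + k0)) \<le> c / (real (m + k0))\<^sup>2" for m
      using measure_window_exceedance[OF assms, of "m + k0"] that by (simp add: c_def)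
    have tail: "summable (\<lambda>m. c / (real (m + k0))\<^sup>2)"
      using summable_ignore_initial_segment[OF summable, of k0] by simp
    then have "summable (\<lambda>m. measure M (window_exceedance M B \<beta> (m + k0)))"
      by (rule summable_comparison_test'[where N = 0]) (use bound in simp)
    then have "measure M (irregular_paths M B \<beta> k0) \<le> (\<Sum>m. measure M (window_exceedance M B \<beta> (m + k0)))"
      unfolding irregular_paths_def window_exceedance_def
      using dyadic_exceedance_sets[OF assms(1)] assms(2)
      by (intro finite_measure_subadditive_countably) auto
    also have "\<dots> \<le> (\<Sum>m. c / (real (m + k0))\<^sup>2)"
      using bound \<open>summable (\<lambda>m. measure M (window_exceedance M B \<beta> (m + k0)))\<close> tail by (rule suminf_le)
    finally show ?thesis .
  qed
  have "\<forall>\<^sub>F k0 in sequentially. measure M (irregular_paths M B \<beta> k0) \<le> (\<Sum>m. c / (real (m + k0))\<^sup>2)"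
    using eventually_ge_at_top[of 1] by (rule eventually_mono) (rule tail_bound)
  moreover have "(\<lambda>k0. \<Sum>m. c / (real (m + k0))\<^sup>2) \<longlonglongrightarrow> 0"
    using suminf_exist_split2[OF summable] by simp
  ultimately show ?thesis
    by (rule tendsto_sandwich[OF always_eventually[OF allI[OF measure_nonneg]] _ tendsto_const])
qed

lemma diffusion_path_band_off_irregular_paths:
  assumes "brownian_motion M B" "0 < \<beta>" "\<omega> \<in> space M" "\<omega> \<notin> irregular_paths M B \<beta> k0"
    and "real k0 \<le> N" "16 + 9 * \<beta>\<^sup>2 \<le> a + N / 8"
    and "diffusion_path (\<lambda>t. B t \<omega>) \<beta> a (N / \<beta>) 0 Z" "(N + 1) / \<beta> \<le> t"
  shows "s_fun \<beta> a t / 2 \<le> Z t \<and> Z t \<le> 3 / 2 * s_fun \<beta> a t"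
proof -
  interpret riccati_forcing \<beta> a "N / \<beta>" "\<lambda>t. B t \<omega>"
  proof
    show "0 < \<beta>" "0 \<le> N / \<beta>" using assms(2,5) by auto
    show "16 + 9 * \<beta>\<^sup>2 \<le> a + \<beta> * (N / \<beta>) / 8" using assms(2,6) by simp
    fix u v assume "N / \<beta> \<le> u" "u \<le> v" "v \<le> u + 1 / \<beta>"
    moreover have "real k0 / \<beta> \<le> N / \<beta>" using assms(2,5) by (simp add: divide_right_mono)
    ultimately show "(B v \<omega> - B u \<omega>)\<^sup>2 \<le> \<beta> * u / 512"
      using small_increments_off_irregular_paths[OF assms(1-4)] by simp
  qed
  show ?thesis using diffusion_path_band[OF assms(7)] assms(8) by (simp add: add_divide_distrib)
qed

lemma irregular_paths_complement_subset:
  assumes "brownian_motion M B" "0 < \<beta>" "8 * (17 + 9 * \<beta>\<^sup>2 - real_of_int l) \<le> real k0"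
  shows "space M - irregular_paths M B \<beta> k0 \<subseteq> {\<omega>\<in>space M.
           \<forall>a\<in>{real_of_int l - 1 .. real_of_int l}. \<forall>N::int. N \<ge> int k0 \<longrightarrow>
             (\<forall>Z. diffusion_path (\<lambda>t. B t \<omega>) \<beta> a (real_of_int N / \<beta>) 0 Z \<longrightarrow>
               (\<forall>t \<ge> (real_of_int N + 1) / \<beta>.
                  s_fun \<beta> a t / 2 \<le> Z t \<and> Z t \<le> 3 / 2 * s_fun \<beta> a t))}"
proof (intro subsetI CollectI conjI ballI allI impI)
  fix \<omega> a N Z t
  assume \<omega>: "\<omega> \<in> space M - irregular_paths M B \<beta> k0" and a: "a \<in> {real_of_int l - 1 .. real_of_int l}"
    and N: "int k0 \<le> N" and path: "diffusion_path (\<lambda>t. B t \<omega>) \<beta> a (real_of_int N / \<beta>) 0 Z"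
    and t: "(real_of_int N + 1) / \<beta> \<le> t"
  have "real k0 \<le> real_of_int N" using N by linarith
  moreover from this have "16 + 9 * \<beta>\<^sup>2 \<le> a + real_of_int N / 8" using a assms(3) by simp
  ultimately show "s_fun \<beta> a t / 2 \<le> Z t" "Z t \<le> 3 / 2 * s_fun \<beta> a t"
    using diffusion_path_band_off_irregular_paths[OF assms(1,2) _ _ _ _ path t] \<omega> by auto
qed simp

theorem proposition3p8:
  fixes M :: "'a measure" and B :: "real \<Rightarrow> 'a \<Rightarrow> real" and l :: int and \<beta> :: real
  assumes "brownian_motion M B" and "\<beta> > 0"
  shows "\<forall>\<epsilon>>0. \<forall>\<^sub>F k0 in sequentially.
           \<exists>E\<in>sets M. measure M E \<ge> 1 - \<epsilon> \<and>
             E \<subseteq> {\<omega>\<in>space M.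
               \<forall>a\<in>{real_of_int l - 1 .. real_of_int l}. \<forall>N::int. N \<ge> int k0 \<longrightarrow>
                 (\<forall>Z. diffusion_path (\<lambda>t. B t \<omega>) \<beta> a (real_of_int N / \<beta>) 0 Z \<longrightarrow>
                   (\<forall>t \<ge> (real_of_int N + 1) / \<beta>.
                      s_fun \<beta> a t / 2 \<le> Z t \<and> Z t \<le> 3 / 2 * s_fun \<beta> a t))}"
proof -
  have "prob_space M" using assms(1) by (simp add: brownian_motion_def)
  moreover have "\<forall>\<^sub>F k0 in sequentially. 8 * (17 + 9 * \<beta>\<^sup>2 - real_of_int l) \<le> real k0"
    using filterlim_real_sequentially by (simp add: filterlim_at_top)
  ultimately show ?thesis
    by (rule eventually_high_probability[OF _ measure_irregular_paths_tendsto_0[OF assms]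
          irregular_paths_sets[OF assms] _ irregular_paths_complement_subset[OF assms, where l = l]])
qed

end
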